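(* Let $L>0$, $\tau>0$ and let $Z_1,\dots,Z_m$ be random variables with $\max_{1\le j\le m}\|Z_j\|_{\Psi_2(\cdot;L)}\le\tau$. Then $$\Big\|\Big(\max_{1\le j\le m}|Z_j|-\frac{\tau}{L}\,h_2^{-1}\Big(\frac{L^2}{2}\log(1+m)\Big)\Big)_+\Big\|_{\Psi_2(\cdot;\sqrt3 L)}\le\sqrt3\,\tau .$$
   Context: For $x\ge 0$ let $h_2(x)=(1+x)\log(1+x)-x$, an increasing bijection of $[0,\infty)$ onto itself, with inverse $h_2^{-1}$. For $L>0$ let $\Psi_2(x;L)=\exp\big(\frac{2}{L^2}h_2(Lx)\big)-1$. The Orlicz norm is $\|X\|_{\Psi}=\inf\{c>0: E\Psi(|X|/c)\le 1\}$; $(a)_+=\max(a,0)$. *)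

theory Defs
  imports "HOL-Probability.Probability"
begin

definition h2 :: "real \<Rightarrow> real" where
  "h2 x = (1 + x) * ln (1 + x) - x"

definition h2_inv :: "real \<Rightarrow> real" where
  "h2_inv y = (THE x. x \<ge> 0 \<and> h2 x = y)"

definition Psi2 :: "real \<Rightarrow> real \<Rightarrow> real" where
  "Psi2 L x = exp (2 / L\<^sup>2 * h2 (L * x)) - 1"

text \<open>Orlicz norm, valued in extended reals (infinity if no admissible c exists).
  The expectation of the nonnegative quantity is the nonnegative integral.\<close>
definition orlicz_norm :: "'a measure \<Rightarrow> (real \<Rightarrow> real) \<Rightarrow> ('a \<Rightarrow> real) \<Rightarrow> ereal" where
  "orlicz_norm M Psi X =
     Inf {ereal c | c. c > 0 \<and> (\<integral>\<^sup>+ \<omega>. ennreal (Psi (\<bar>X \<omega>\<bar> / c)) \<partial>M) \<le> 1}"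

end

theory Submission
  imports Defs
begin

text \<open>With \<open>b = h2\<^sup>-\<^sup>1(L\<^sup>2/2 \<cdot> log(1+m))\<close> and \<open>s = L \<cdot> max\<^sub>j |Z\<^sub>j| / \<tau>\<close>, superadditivity of \<open>h2\<close>
  gives \<open>h2 (s - b) \<le> h2 s - L\<^sup>2/2 \<cdot> log(1+m)\<close> whenever \<open>s > b\<close>. Rescaling by \<open>\<surd>3\<close> divides the
  exponent of \<open>\<Psi>\<^sub>2\<close> by 3, and AM-GM in the form \<open>3 e\<^bsup>x/3\<^esup> \<le> e\<^sup>x + 2\<close> then bounds, for the excess \<open>W\<close>,
  \<open>\<Psi>\<^sub>2(W/(\<surd>3\<tau>); \<surd>3 L)\<close> pointwise by \<open>\<Sum>\<^sub>j (\<Psi>\<^sub>2(|Z\<^sub>j|/\<tau>; L) + 1) / (3(1+m))\<close>. Taking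
  expectations, each summand contributes at most 2, and \<open>2m / (3(1+m)) \<le> 1\<close>.\<close>

lemma h2_has_real_derivative: "x > -1 \<Longrightarrow> (h2 has_real_derivative ln (1 + x)) (at x)"
  unfolding h2_def by (auto intro!: derivative_eq_intros simp: field_simps)

lemma h2_0 [simp]: "h2 0 = 0"
  by (simp add: h2_def)

lemma isCont_h2: "x > -1 \<Longrightarrow> isCont h2 x"
  using h2_has_real_derivative DERIV_isCont by blast

lemma h2_less:
  assumes "0 \<le> x" "x < y" shows "h2 x < h2 y"
proof (rule DERIV_pos_imp_increasing_open[OF assms(2)])
  fix t assume "x < t" "t < y"
  then show "\<exists>d. (h2 has_real_derivative d) (at t) \<and> d > 0"
    using assms h2_has_real_derivative[of t] by (intro exI[of _ "ln (1 + t)"]) auto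
next
  show "continuous_on {x..y} h2"
    using assms by (intro continuous_at_imp_continuous_on ballI isCont_h2) auto
qed

lemma h2_le: "0 \<le> x \<Longrightarrow> x \<le> y \<Longrightarrow> h2 x \<le> h2 y"
  using h2_less by (cases "x = y") (auto simp: less_le)

lemma h2_superadditive:
  assumes "0 \<le> x" "0 \<le> y" shows "h2 x + h2 y \<le> h2 (x + y)"
proof -
  let ?F = "\<lambda>t. h2 (x + t) - h2 x - h2 t"
  have "?F 0 \<le> ?F y"
  proof (rule DERIV_nonneg_imp_nondecreasing[OF assms(2)])
    fix t assume t: "0 \<le> t" "t \<le> y"
    have "(?F has_real_derivative ln (1 + (x + t)) * 1 - 0 - ln (1 + t)) (at t)"
      using t assms
      by (intro DERIV_diff DERIV_const h2_has_real_derivative DERIV_chain2[OF h2_has_real_derivative])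
         (auto intro!: derivative_eq_intros)
    moreover have "ln (1 + (x + t)) * 1 - 0 - ln (1 + t) \<ge> 0"
      using t assms by simp
    ultimately show "\<exists>d. (?F has_real_derivative d) (at t) \<and> d \<ge> 0" by blast
  qed
  then show ?thesis by simp
qed

lemma h2_ge_self:
  assumes "exp 2 - 1 \<le> x" shows "x \<le> h2 x"
proof -
  have "0 < 1 + x" using assms exp_gt_zero[of 2] by linarith
  then have "2 \<le> ln (1 + x)" using assms by (subst ln_ge_iff) auto
  then have "(1 + x) * 2 \<le> (1 + x) * ln (1 + x)"
    using \<open>0 < 1 + x\<close> by (intro mult_left_mono) auto
  then show ?thesis unfolding h2_def by (simp add: algebra_simps)
qed

lemma h2_inv:
  assumes "0 \<le> y" shows "0 \<le> h2_inv y" "h2 (h2_inv y) = y"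
proof -
  define X where "X = max y (exp 2 - 1)"
  have "y \<le> h2 X" "0 \<le> X"
    using h2_ge_self[of X] assms by (auto simp: X_def)
  then obtain x where x: "0 \<le> x" "h2 x = y"
    using IVT[of h2 0 y X] isCont_h2 assms by force
  have "\<exists>!x. 0 \<le> x \<and> h2 x = y"
    using x h2_less by (intro ex1I[of _ x]) (auto, metis linorder_neq_iff)
  then have "0 \<le> h2_inv y \<and> h2 (h2_inv y) = y"
    unfolding h2_inv_def by (rule theI')
  then show "0 \<le> h2_inv y" "h2 (h2_inv y) = y" by auto
qed

lemma Psi2_0 [simp]: "Psi2 L 0 = 0"
  by (simp add: Psi2_def)

lemma Psi2_le:
  assumes "L > 0" "0 \<le> x" "x \<le> y" shows "Psi2 L x \<le> Psi2 L y"
proof -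
  have "h2 (L * x) \<le> h2 (L * y)"
    using assms by (intro h2_le) auto
  then show ?thesis
    using assms unfolding Psi2_def by (simp add: divide_right_mono)
qed

lemma Psi2_nonneg: "L > 0 \<Longrightarrow> 0 \<le> x \<Longrightarrow> 0 \<le> Psi2 L x"
  using Psi2_le[of L 0 x] by simp

lemma isCont_Psi2:
  assumes "L > 0" "0 \<le> x" shows "isCont (Psi2 L) x"
proof -
  have "0 < 1 + L * x" using assms by (simp add: add_pos_nonneg)
  then show ?thesis
    using assms unfolding Psi2_def h2_def by (auto intro!: continuous_intros)
qed

lemma borel_measurable_Psi2 [measurable]: "Psi2 L \<in> borel_measurable borel"
  unfolding Psi2_def[abs_def] h2_def by measurable

lemma Psi2_rescale: "c \<noteq> 0 \<Longrightarrow> Psi2 (c * L) (x / c) = exp (2 / (c\<^sup>2 * L\<^sup>2) * h2 (L * x)) - 1"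
  by (simp add: Psi2_def power_mult_distrib)

lemma orlicz_norm_leI:
  assumes "c > 0" "(\<integral>\<^sup>+\<omega>. ennreal (Psi (\<bar>X \<omega>\<bar> / c)) \<partial>M) \<le> 1"
  shows "orlicz_norm M Psi X \<le> ereal c"
  unfolding orlicz_norm_def using assms by (intro Inf_lower) auto

lemma orlicz_norm_less_imp_nn_integral_le:
  assumes "orlicz_norm M Psi X < ereal c"
    and mono: "\<And>x y. 0 \<le> x \<Longrightarrow> x \<le> y \<Longrightarrow> Psi x \<le> Psi y"
  shows "(\<integral>\<^sup>+\<omega>. ennreal (Psi (\<bar>X \<omega>\<bar> / c)) \<partial>M) \<le> 1"
proof -
  obtain c0 where c0: "c0 < c" "c0 > 0" "(\<integral>\<^sup>+\<omega>. ennreal (Psi (\<bar>X \<omega>\<bar> / c0)) \<partial>M) \<le> 1"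
    using assms(1) unfolding orlicz_norm_def Inf_less_iff by auto
  have "(\<integral>\<^sup>+\<omega>. ennreal (Psi (\<bar>X \<omega>\<bar> / c)) \<partial>M) \<le> (\<integral>\<^sup>+\<omega>. ennreal (Psi (\<bar>X \<omega>\<bar> / c0)) \<partial>M)"
    using c0 by (intro nn_integral_mono ennreal_leI mono) (auto intro: divide_left_mono)
  then show ?thesis using c0 by simp
qed

text \<open>The infimum in the Orlicz norm is attained (Fatou's lemma along \<open>c + 1/(n+1) \<down> c\<close>).\<close>

lemma orlicz_norm_le_imp_nn_integral_le:
  assumes norm: "orlicz_norm M Psi X \<le> ereal c" and "c > 0"
    and [measurable]: "X \<in> borel_measurable M" "Psi \<in> borel_measurable borel"
    and cont: "\<And>x. 0 \<le> x \<Longrightarrow> isCont Psi x"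
    and mono: "\<And>x y. 0 \<le> x \<Longrightarrow> x \<le> y \<Longrightarrow> Psi x \<le> Psi y"
  shows "(\<integral>\<^sup>+\<omega>. ennreal (Psi (\<bar>X \<omega>\<bar> / c)) \<partial>M) \<le> 1"
proof -
  define c' where "c' n = c + inverse (real (Suc n))" for n
  have "c' \<longlonglongrightarrow> c"
    unfolding c'_def by (rule LIMSEQ_inverse_real_of_nat_add)
  define u where "u n \<omega> = ennreal (Psi (\<bar>X \<omega>\<bar> / c' n))" for n \<omega>
  have [measurable]: "u n \<in> borel_measurable M" for n
    unfolding u_def by measurable
  have u_le: "integral\<^sup>N M (u n) \<le> 1" for n
  proof -
    have "orlicz_norm M Psi X < ereal (c' n)"
      using norm by (rule le_less_trans) (simp add: c'_def)
    then show ?thesis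
      unfolding u_def using mono by (rule orlicz_norm_less_imp_nn_integral_le)
  qed
  have "liminf (\<lambda>n. u n \<omega>) = ennreal (Psi (\<bar>X \<omega>\<bar> / c))" for \<omega>
  proof (rule lim_imp_Liminf)
    have "(\<lambda>n. \<bar>X \<omega>\<bar> / c' n) \<longlonglongrightarrow> \<bar>X \<omega>\<bar> / c"
      using \<open>c' \<longlonglongrightarrow> c\<close> \<open>c > 0\<close> by (intro tendsto_intros) auto
    then show "(\<lambda>n. u n \<omega>) \<longlonglongrightarrow> ennreal (Psi (\<bar>X \<omega>\<bar> / c))"
      unfolding u_def using cont \<open>c > 0\<close>
      by (intro tendsto_ennrealI isCont_tendsto_compose[where g = Psi]) auto
  qed simp
  then have "(\<integral>\<^sup>+\<omega>. ennreal (Psi (\<bar>X \<omega>\<bar> / c)) \<partial>M) = (\<integral>\<^sup>+\<omega>. liminf (\<lambda>n. u n \<omega>) \<partial>M)"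
    by simp
  also have "\<dots> \<le> liminf (\<lambda>n. integral\<^sup>N M (u n))"
    by (rule nn_integral_liminf) measurable
  also have "\<dots> \<le> 1"
    using u_le by (intro Liminf_le) (auto intro: always_eventually)
  finally show ?thesis .
qed

lemma three_exp_div_three_le: "3 * exp (x / 3) \<le> exp x + (2::real)"
proof -
  define t where "t = exp (x / 3)"
  have "exp x = t ^ 3" unfolding t_def by (simp flip: exp_of_nat_mult)
  moreover have "t ^ 3 + 2 - 3 * t = (t - 1)\<^sup>2 * (t + 2)"
    by (simp add: power2_eq_square power3_eq_cube algebra_simps)
  moreover have "(t - 1)\<^sup>2 * (t + 2) \<ge> 0" by (simp add: t_def add_pos_pos)
  ultimately show ?thesis unfolding t_def by linarith
qed

lemma Psi2_sqrt3_shift_le: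
  assumes L: "L > 0" and x: "0 \<le> x" and b: "0 \<le> b"
  shows "Psi2 (sqrt 3 * L) (max 0 (x - b / L) / sqrt 3)
           \<le> (Psi2 L x + 1) / (3 * exp (2 / L\<^sup>2 * h2 b))"
proof (cases "x \<le> b / L")
  case True
  then show ?thesis using Psi2_nonneg[OF L x] by (simp add: add_nonneg_pos)
next
  case False
  then have shift: "L * (x - b / L) = L * x - b"
    using L by (simp add: field_simps)
  define A where "A = 2 / L\<^sup>2 * h2 (L * x - b)"
  have "h2 (L * x - b) + h2 b \<le> h2 (L * x)"
    using h2_superadditive[of "L * x - b" b] False L b by (simp add: field_simps)
  then have "A \<le> 2 / L\<^sup>2 * h2 (L * x) - 2 / L\<^sup>2 * h2 b"
    unfolding A_def using L by (simp add: field_simps)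
  then have "exp A \<le> exp (2 / L\<^sup>2 * h2 (L * x)) / exp (2 / L\<^sup>2 * h2 b)"
    by (simp only: exp_le_cancel_iff flip: exp_diff)
  also have "\<dots> = (Psi2 L x + 1) / exp (2 / L\<^sup>2 * h2 b)"
    by (simp add: Psi2_def)
  finally have expA: "exp A \<le> (Psi2 L x + 1) / exp (2 / L\<^sup>2 * h2 b)" .
  have "Psi2 (sqrt 3 * L) (max 0 (x - b / L) / sqrt 3) = exp (2 / (3 * L\<^sup>2) * h2 (L * x - b)) - 1"
    using False by (simp add: Psi2_rescale flip: shift)
  also have "\<dots> = exp (A / 3) - 1"
    unfolding A_def by simp
  also have "\<dots> \<le> exp A / 3"
    using three_exp_div_three_le[of A] by simp
  finally show ?thesis
    using expA by simp
qed

lemma Psi2_excess_Max_le_sum: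
  fixes z :: "'b \<Rightarrow> real"
  assumes J: "finite J" "J \<noteq> {}" and L: "L > 0" and \<tau>: "\<tau> > 0"
    and b: "0 \<le> b" "h2 b = L\<^sup>2 / 2 * ln (1 + real (card J))"
  shows "Psi2 (sqrt 3 * L) (\<bar>max 0 (Max ((\<lambda>j. \<bar>z j\<bar>) ` J) - \<tau> / L * b)\<bar> / (sqrt 3 * \<tau>))
           \<le> (\<Sum>j\<in>J. Psi2 L (\<bar>z j\<bar> / \<tau>) + 1) / (3 * (1 + real (card J)))"
proof -
  have "Max ((\<lambda>j. \<bar>z j\<bar>) ` J) \<in> (\<lambda>j. \<bar>z j\<bar>) ` J"
    using J by (intro Max_in) auto
  then obtain k where k: "k \<in> J" "Max ((\<lambda>j. \<bar>z j\<bar>) ` J) = \<bar>z k\<bar>"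
    by auto
  have arg: "\<bar>max 0 (\<bar>z k\<bar> - \<tau> / L * b)\<bar> / (sqrt 3 * \<tau>) = max 0 (\<bar>z k\<bar> / \<tau> - b / L) / sqrt 3"
    using L \<tau> by (simp add: field_simps max_divide_distrib_right)
  have "2 / L\<^sup>2 * h2 b = ln (1 + real (card J))"
    using b L by (simp add: field_simps)
  then have "exp (2 / L\<^sup>2 * h2 b) = 1 + real (card J)"
    by simp
  then have "Psi2 (sqrt 3 * L) (max 0 (\<bar>z k\<bar> / \<tau> - b / L) / sqrt 3)
               \<le> (Psi2 L (\<bar>z k\<bar> / \<tau>) + 1) / (3 * (1 + real (card J)))"
    using Psi2_sqrt3_shift_le[of L "\<bar>z k\<bar> / \<tau>" b] L \<tau> b by simp
  also have "\<dots> \<le> (\<Sum>j\<in>J. Psi2 L (\<bar>z j\<bar> / \<tau>) + 1) / (3 * (1 + real (card J)))"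
    using J k Psi2_nonneg[OF L] \<tau>
    by (intro divide_right_mono member_le_sum) (auto intro: add_nonneg_nonneg)
  finally show ?thesis
    unfolding k(2) arg .
qed

lemma (in prob_space) nn_integral_sum_plus_one_le:
  fixes f :: "'b \<Rightarrow> 'a \<Rightarrow> real"
  assumes "finite J" and [measurable]: "\<And>j. j \<in> J \<Longrightarrow> f j \<in> borel_measurable M"
    and nonneg: "\<And>j \<omega>. j \<in> J \<Longrightarrow> 0 \<le> f j \<omega>"
    and le1: "\<And>j. j \<in> J \<Longrightarrow> (\<integral>\<^sup>+\<omega>. ennreal (f j \<omega>) \<partial>M) \<le> 1"
  shows "(\<integral>\<^sup>+\<omega>. ennreal (\<Sum>j\<in>J. f j \<omega> + 1) \<partial>M) \<le> 2 * of_nat (card J)"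
proof -
  have "ennreal (\<Sum>j\<in>J. f j \<omega> + 1) = (\<Sum>j\<in>J. ennreal (f j \<omega>) + 1)" for \<omega>
    using nonneg by (simp add: ennreal_plus add_nonneg_nonneg flip: sum_ennreal)
  then have "(\<integral>\<^sup>+\<omega>. ennreal (\<Sum>j\<in>J. f j \<omega> + 1) \<partial>M) = (\<Sum>j\<in>J. (\<integral>\<^sup>+\<omega>. ennreal (f j \<omega>) \<partial>M) + 1)"
    using \<open>finite J\<close> by (simp add: nn_integral_sum nn_integral_add emeasure_space_1)
  also have "\<dots> \<le> (\<Sum>j\<in>J. 2)"
    using le1 by (intro sum_mono) (metis add_right_mono one_add_one)
  finally show ?thesis by (simp add: mult.commute)
qed

lemma (in prob_space) nn_integral_Psi2_excess_Max_le:
  fixes Z :: "'b \<Rightarrow> 'a \<Rightarrow> real"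
  assumes J: "finite J" "J \<noteq> {}" and L: "L > 0" and \<tau>: "\<tau> > 0"
    and b: "0 \<le> b" "h2 b = L\<^sup>2 / 2 * ln (1 + real (card J))"
    and Z: "\<And>j. j \<in> J \<Longrightarrow> Z j \<in> borel_measurable M"
    and Z_le1: "\<And>j. j \<in> J \<Longrightarrow> (\<integral>\<^sup>+\<omega>. ennreal (Psi2 L (\<bar>Z j \<omega>\<bar> / \<tau>)) \<partial>M) \<le> 1"
  shows "(\<integral>\<^sup>+\<omega>. ennreal (Psi2 (sqrt 3 * L)
            (\<bar>max 0 (Max ((\<lambda>j. \<bar>Z j \<omega>\<bar>) ` J) - \<tau> / L * b)\<bar> / (sqrt 3 * \<tau>))) \<partial>M) \<le> 1"
    (is "(\<integral>\<^sup>+\<omega>. ennreal (?\<Psi> \<omega>) \<partial>M) \<le> 1")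
proof -
  define \<kappa> where "\<kappa> = 1 / (3 * (1 + real (card J)))"
  define S where "S \<omega> = (\<Sum>j\<in>J. Psi2 L (\<bar>Z j \<omega>\<bar> / \<tau>) + 1)" for \<omega>
  have [measurable]: "S \<in> borel_measurable M"
    unfolding S_def using Z by measurable
  have S_nonneg: "0 \<le> S \<omega>" for \<omega>
    unfolding S_def using Psi2_nonneg[OF L] \<tau> by (intro sum_nonneg add_nonneg_nonneg) auto
  have "(\<integral>\<^sup>+\<omega>. ennreal (?\<Psi> \<omega>) \<partial>M) \<le> (\<integral>\<^sup>+\<omega>. ennreal \<kappa> * ennreal (S \<omega>) \<partial>M)"
    using Psi2_excess_Max_le_sum[OF J L \<tau> b] S_nonneg
    by (intro nn_integral_mono) (simp add: \<kappa>_def S_def ennreal_mult' flip: ennreal_mult)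
  also have "\<dots> = ennreal \<kappa> * (\<integral>\<^sup>+\<omega>. ennreal (S \<omega>) \<partial>M)"
    by (rule nn_integral_cmult) measurable
  also have "\<dots> \<le> ennreal \<kappa> * (2 * of_nat (card J))"
    unfolding S_def using J Z Z_le1 Psi2_nonneg[OF L] \<tau>
    by (intro mult_left_mono nn_integral_sum_plus_one_le) auto
  also have "\<dots> \<le> 1"
    by (simp add: \<kappa>_def ennreal_of_nat_eq_real_of_nat flip: ennreal_mult ennreal_1 ennreal_numeral)
  finally show ?thesis .
qed

theorem lemma10:
  fixes M :: "'a measure" and Z :: "nat \<Rightarrow> 'a \<Rightarrow> real" and L \<tau> :: real and m :: nat
  assumes "prob_space M"
    and "L > 0" and "\<tau> > 0" and "m \<ge> 1"
    and "\<And>j. j \<in> {1..m} \<Longrightarrow> Z j \<in> borel_measurable M"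
    and "\<And>j. j \<in> {1..m} \<Longrightarrow> orlicz_norm M (Psi2 L) (Z j) \<le> ereal \<tau>"
  shows "orlicz_norm M (Psi2 (sqrt 3 * L))
           (\<lambda>\<omega>. max 0 (Max ((\<lambda>j. \<bar>Z j \<omega>\<bar>) ` {1..m})
                   - \<tau> / L * h2_inv (L\<^sup>2 / 2 * ln (1 + real m))))
         \<le> ereal (sqrt 3 * \<tau>)"
proof -
  interpret prob_space M by fact
  note L = \<open>L > 0\<close> and \<tau> = \<open>\<tau> > 0\<close>
  have b: "0 \<le> h2_inv (L\<^sup>2 / 2 * ln (1 + real m))"
    "h2 (h2_inv (L\<^sup>2 / 2 * ln (1 + real m))) = L\<^sup>2 / 2 * ln (1 + real (card {1..m}))"
    using h2_inv[of "L\<^sup>2 / 2 * ln (1 + real m)"] by auto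
  have "(\<integral>\<^sup>+\<omega>. ennreal (Psi2 L (\<bar>Z j \<omega>\<bar> / \<tau>)) \<partial>M) \<le> 1" if "j \<in> {1..m}" for j
    using assms(5,6)[OF that] L \<tau>
    by (intro orlicz_norm_le_imp_nn_integral_le isCont_Psi2 Psi2_le) auto
  with assms(4,5) show ?thesis
    using L \<tau> by (intro orlicz_norm_leI nn_integral_Psi2_excess_Max_le[OF _ _ L \<tau> b]) auto
qed

end
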